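(* Let $G_1,G_2$ be cubic graphs, let $c_1\sim c_2$ be proper $3$-edge colorings of $G_1$ and $d_1\sim d_2$ proper $3$-edge colorings of $G_2$. Then $(c_1\,Y\,d_1)\sim(c_2\,Y\,d_2)$ in $G_1\,Y\,G_2$ and $(c_1\,H\,d_1)\sim(c_2\,H\,d_2)$ in $G_1\,H\,G_2$.
   Context: Graphs are finite; multiple edges allowed, loops not. Proper $3$-edge colorings use colors $\{1,2,3\}$, adjacent edges receiving different colors. For colors $a\neq b$, an edge-Kempe chain is a connected component of the subgraph of edges colored $a$ or $b$; an edge-Kempe switch swaps $a,b$ on one chain; $\sim$ denotes equivalence under finite sequences of such switches. Composition Y: choose $v_1\in G_1$ with incident edges $x_j=v_1s_{1j}$ and $v_2\in G_2$ with incident edges $y_j=v_2s_{2j}$ ($j=1,2,3$); $G_1\,Y\,G_2$ deletes $v_1,v_2$ and adds edges $s_{1j}s_{2j}$. Composition H: choose edges $x=s_{11}s_{12}\in G_1$, $y=s_{21}s_{22}\in G_2$; $G_1\,H\,G_2$ deletes $x,y$ and adds $s_{11}s_{21},s_{12}s_{22}$. For proper $3$-edge colorings $c$ of $G_1$, $d$ of $G_2$: let $\hat d$ be obtained from $d$ by a global color permutation with $\hat d(y_j)=c(x_j)$; $c\,Y\,d$ colors $G_1-v_1$ by $c$, $G_2-v_2$ by $\hat d$, and $s_{1j}s_{2j}$ by $c(x_j)$. Let $\tilde d$ be obtained from $d$ by a global color permutation with $\tilde d(y)=c(x)$; $c\,H\,d$ colors $G_1-x$ by $c$, $G_2-y$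 by $\tilde d$, and both new edges by $c(x)$. *)

theory Defs
  imports "HOL-Combinatorics.Permutations"
begin

text \<open>Finite multigraphs without loops: edges are abstract identifiers (so parallel
edges are allowed), each edge has a 2-element set of end vertices.\<close>

record ('v, 'e) mgraph =
  verts :: "'v set"
  edges :: "'e set"
  ends  :: "'e \<Rightarrow> 'v set"

definition wf_graph :: "('v, 'e) mgraph \<Rightarrow> bool" where
  "wf_graph G \<longleftrightarrow> finite (verts G) \<and> finite (edges G) \<and>
     (\<forall>e \<in> edges G. card (ends G e) = 2 \<and> ends G e \<subseteq> verts G)"

definition incident :: "('v, 'e) mgraph \<Rightarrow> 'v \<Rightarrow> 'e set" where
  "incident G v = {e \<in> edges G. v \<in> ends G e}"

definition cubic :: "('v, 'e) mgraph \<Rightarrow> bool" where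
  "cubic G \<longleftrightarrow> wf_graph G \<and> (\<forall>v \<in> verts G. card (incident G v) = 3)"

definition proper_3col :: "('v, 'e) mgraph \<Rightarrow> ('e \<Rightarrow> nat) \<Rightarrow> bool" where
  "proper_3col G c \<longleftrightarrow>
     (\<forall>e \<in> edges G. c e \<in> {1,2,3}) \<and> (\<forall>e. e \<notin> edges G \<longrightarrow> c e = 0) \<and>
     (\<forall>e \<in> edges G. \<forall>f \<in> edges G. e \<noteq> f \<and> ends G e \<inter> ends G f \<noteq> {} \<longrightarrow> c e \<noteq> c f)"

definition ab_adj :: "('v, 'e) mgraph \<Rightarrow> ('e \<Rightarrow> nat) \<Rightarrow> nat \<Rightarrow> nat \<Rightarrow> 'e \<Rightarrow> 'e \<Rightarrow> bool" where
  "ab_adj G c a b e f \<longleftrightarrow> e \<in> edges G \<and> f \<in> edges G \<and> c e \<in> {a, b} \<and> c f \<in> {a, b} \<and>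
     ends G e \<inter> ends G f \<noteq> {}"

definition kempe_chain :: "('v, 'e) mgraph \<Rightarrow> ('e \<Rightarrow> nat) \<Rightarrow> nat \<Rightarrow> nat \<Rightarrow> 'e \<Rightarrow> 'e set" where
  "kempe_chain G c a b e = {f. (ab_adj G c a b)\<^sup>*\<^sup>* e f}"

definition swap_col :: "nat \<Rightarrow> nat \<Rightarrow> nat \<Rightarrow> nat" where
  "swap_col a b k = (if k = a then b else if k = b then a else k)"

definition kempe_step :: "('v, 'e) mgraph \<Rightarrow> ('e \<Rightarrow> nat) \<Rightarrow> ('e \<Rightarrow> nat) \<Rightarrow> bool" where
  "kempe_step G c c' \<longleftrightarrow> (\<exists>a b e. a \<in> {1,2,3} \<and> b \<in> {1,2,3} \<and> a \<noteq> b \<and>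
      e \<in> edges G \<and> c e \<in> {a, b} \<and>
      c' = (\<lambda>f. if f \<in> kempe_chain G c a b e then swap_col a b (c f) else c f))"

definition kempe_equiv :: "('v, 'e) mgraph \<Rightarrow> ('e \<Rightarrow> nat) \<Rightarrow> ('e \<Rightarrow> nat) \<Rightarrow> bool" where
  "kempe_equiv G c c' \<longleftrightarrow> (kempe_step G)\<^sup>*\<^sup>* c c'"

definition other_end :: "('v, 'e) mgraph \<Rightarrow> 'e \<Rightarrow> 'v \<Rightarrow> 'v" where
  "other_end G e v = (THE u. u \<in> ends G e \<and> u \<noteq> v)"

definition Y_data :: "('v, 'e) mgraph \<Rightarrow> 'v \<Rightarrow> (nat \<Rightarrow> 'e) \<Rightarrow> bool" where
  "Y_data G v x \<longleftrightarrow> v \<in> verts G \<and> inj_on x {1,2,3} \<and> incident G v = x ` {1,2,3}"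

text \<open>Vertices of G1 Y G2: Inl/Inr copies of the surviving vertices. Edges: the edges of G1
(with Inl (x j) now being the new edge s1j s2j) and the edges of G2 other than the y j.\<close>

definition graphY :: "('v1, 'e1) mgraph \<Rightarrow> 'v1 \<Rightarrow> (nat \<Rightarrow> 'e1) \<Rightarrow>
    ('v2, 'e2) mgraph \<Rightarrow> 'v2 \<Rightarrow> (nat \<Rightarrow> 'e2) \<Rightarrow> ('v1 + 'v2, 'e1 + 'e2) mgraph" where
  "graphY G1 v1 x G2 v2 y =
    \<lparr> verts = Inl ` (verts G1 - {v1}) \<union> Inr ` (verts G2 - {v2}),
      edges = Inl ` edges G1 \<union> Inr ` (edges G2 - y ` {1,2,3}),
      ends = (\<lambda>e. case e of
                Inl e1 \<Rightarrow> (if e1 \<in> x ` {1,2,3} then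
                             (let j = (THE j. j \<in> {1,2,3} \<and> x j = e1) in
                               {Inl (other_end G1 (x j) v1), Inr (other_end G2 (y j) v2)})
                           else Inl ` ends G1 e1)
              | Inr e2 \<Rightarrow> Inr ` ends G2 e2) \<rparr>"

definition colY :: "('v1, 'e1) mgraph \<Rightarrow> 'v1 \<Rightarrow> (nat \<Rightarrow> 'e1) \<Rightarrow>
    ('v2, 'e2) mgraph \<Rightarrow> 'v2 \<Rightarrow> (nat \<Rightarrow> 'e2) \<Rightarrow>
    ('e1 \<Rightarrow> nat) \<Rightarrow> ('e2 \<Rightarrow> nat) \<Rightarrow> (nat \<Rightarrow> nat) \<Rightarrow> ('e1 + 'e2 \<Rightarrow> nat)" where
  "colY G1 v1 x G2 v2 y c d p =
    (\<lambda>e. if e \<in> edges (graphY G1 v1 x G2 v2 y) then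
           (case e of Inl e1 \<Rightarrow> c e1 | Inr e2 \<Rightarrow> p (d e2))
         else 0)"

definition Y_perm :: "(nat \<Rightarrow> 'e1) \<Rightarrow> (nat \<Rightarrow> 'e2) \<Rightarrow> ('e1 \<Rightarrow> nat) \<Rightarrow> ('e2 \<Rightarrow> nat) \<Rightarrow> (nat \<Rightarrow> nat) \<Rightarrow> bool" where
  "Y_perm x y c d p \<longleftrightarrow> p permutes {1,2,3} \<and> (\<forall>j \<in> {1,2,3}. p (d (y j)) = c (x j))"

definition H_data :: "('v, 'e) mgraph \<Rightarrow> 'e \<Rightarrow> 'v \<Rightarrow> 'v \<Rightarrow> bool" where
  "H_data G x s1 s2 \<longleftrightarrow> x \<in> edges G \<and> ends G x = {s1, s2}"

definition graphH :: "('v1, 'e1) mgraph \<Rightarrow> 'e1 \<Rightarrow> 'v1 \<Rightarrow> 'v1 \<Rightarrow>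
    ('v2, 'e2) mgraph \<Rightarrow> 'e2 \<Rightarrow> 'v2 \<Rightarrow> 'v2 \<Rightarrow> ('v1 + 'v2, 'e1 + 'e2) mgraph" where
  "graphH G1 x s11 s12 G2 y s21 s22 =
    \<lparr> verts = Inl ` verts G1 \<union> Inr ` verts G2,
      edges = Inl ` edges G1 \<union> Inr ` edges G2,
      ends = (\<lambda>e. case e of
                Inl e1 \<Rightarrow> (if e1 = x then {Inl s11, Inr s21} else Inl ` ends G1 e1)
              | Inr e2 \<Rightarrow> (if e2 = y then {Inl s12, Inr s22} else Inr ` ends G2 e2)) \<rparr>"

definition colH :: "('v1, 'e1) mgraph \<Rightarrow> 'e1 \<Rightarrow> 'v1 \<Rightarrow> 'v1 \<Rightarrow>
    ('v2, 'e2) mgraph \<Rightarrow> 'e2 \<Rightarrow> 'v2 \<Rightarrow> 'v2 \<Rightarrow>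
    ('e1 \<Rightarrow> nat) \<Rightarrow> ('e2 \<Rightarrow> nat) \<Rightarrow> (nat \<Rightarrow> nat) \<Rightarrow> ('e1 + 'e2 \<Rightarrow> nat)" where
  "colH G1 x s11 s12 G2 y s21 s22 c d p =
    (\<lambda>e. if e \<in> edges (graphH G1 x s11 s12 G2 y s21 s22) then
           (case e of Inl e1 \<Rightarrow> c e1 | Inr e2 \<Rightarrow> p (d e2))
         else 0)"

definition H_perm :: "'e1 \<Rightarrow> 'e2 \<Rightarrow> ('e1 \<Rightarrow> nat) \<Rightarrow> ('e2 \<Rightarrow> nat) \<Rightarrow> (nat \<Rightarrow> nat) \<Rightarrow> bool" where
  "H_perm x y c d p \<longleftrightarrow> p permutes {1,2,3} \<and> p (d y) = c x"

end

theory Submission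
  imports Defs
begin

text \<open>A Kempe switch in \<open>G1\<close> acts on a chain \<open>K\<close>. If \<open>K\<close> contains none of the edges along which
  \<open>G1\<close> is glued to \<open>G2\<close>, it is also a chain of the composed graph. Otherwise \<open>K\<close> contains all
  gluing edges of its two colours, and \<open>K\<close> together with all edges of \<open>G2\<close> of these colours is a
  union of chains of the composed graph; switching it switches \<open>K\<close> and composes the colouring of
  \<open>G2\<close> with a transposition. Switches in \<open>G2\<close> are handled in the same way, followed by a global
  transposition that restores the colouring of \<open>G1\<close>. So the composition of \<open>c1\<close> and \<open>d1\<close> is
  equivalent to the gluing of \<open>c2\<close> with \<open>\<sigma> \<circ> d2\<close> for some colour permutation \<open>\<sigma>\<close> that,
  like the prescribed one, matches the colours at the gluing edges. Two such permutations differ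
  by a permutation fixing a colour, i.e.\ by the identity or by the transposition of two colours
  absent from the gluing edges, and the latter is a switch of all chains of these colours in
  \<open>G2\<close>.\<close>

lemma swap_col_eq_transpose: "swap_col a b = transpose a b"
  by (auto simp: swap_col_def transpose_def)

lemma swap_col_swap_col [simp]: "swap_col a b (swap_col a b k) = k"
  by (auto simp: swap_col_def)

lemma swap_col_other: "k \<notin> {a, b} \<Longrightarrow> swap_col a b k = k"
  by (simp add: swap_col_def)

lemma swap_col_permutes: "a \<in> S \<Longrightarrow> b \<in> S \<Longrightarrow> swap_col a b permutes S"
  by (simp add: swap_col_eq_transpose permutes_swap_id)

lemma inj_swap_col: "inj p \<Longrightarrow> p (swap_col a b k) = swap_col (p a) (p b) (p k)"
  by (auto simp: swap_col_def dest: injD)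

lemma permutes_123_fixing:
  assumes "\<rho> permutes {1, 2, 3 :: nat}" and "k \<in> {1, 2, 3}" and "\<rho> k = k"
  obtains "\<rho> = id"
  | a b where "a \<in> {1, 2, 3}" "b \<in> {1, 2, 3}" "a \<noteq> b" "\<rho> = swap_col a b"
proof -
  obtain a b where ab: "{1, 2, 3} - {k} = {a, b}" "a \<noteq> b"
  proof -
    from assms(2) consider "k = 1" | "k = 2" | "k = 3" by blast
    then show thesis
    proof cases
      case 1
      show thesis by (rule that[of 2 3]) (simp_all add: 1 insert_Diff_if)
    next
      case 2
      show thesis by (rule that[of 1 3]) (auto simp: 2)
    next
      case 3
      show thesis by (rule that[of 1 2]) (auto simp: 3)
    qed
  qed
  have "x = k" if "x \<in> {1, 2, 3} - {a, b}" for x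
    using that ab(1) by blast
  then have "\<rho> permutes {a, b}"
    using assms(1) assms(3) permutes_superset by metis
  then have "\<rho> = id \<or> \<rho> = swap_col a b"
    by (simp add: permutes_doubleton_iff swap_col_eq_transpose)
  moreover have "a \<in> {1, 2, 3}" "b \<in> {1, 2, 3}"
    using ab(1) by blast+
  ultimately show thesis
    using that(1) that(2)[of a b] ab(2) by blast
qed

abbreviation meet :: "('v, 'e) mgraph \<Rightarrow> 'e \<Rightarrow> 'e \<Rightarrow> bool" where
  "meet G e f \<equiv> ends G e \<inter> ends G f \<noteq> {}"

definition kempe_switch :: "nat \<Rightarrow> nat \<Rightarrow> 'e set \<Rightarrow> ('e \<Rightarrow> nat) \<Rightarrow> 'e \<Rightarrow> nat" where
  "kempe_switch a b T c = (\<lambda>e. if e \<in> T then swap_col a b (c e) else c e)"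

text \<open>The sets closed in this sense are exactly the unions of edge-Kempe chains for the
  colours \<open>a\<close>, \<open>b\<close>.\<close>

definition kempe_closed :: "('v, 'e) mgraph \<Rightarrow> ('e \<Rightarrow> nat) \<Rightarrow> nat \<Rightarrow> nat \<Rightarrow> 'e set \<Rightarrow> bool" where
  "kempe_closed G c a b T \<longleftrightarrow> T \<subseteq> edges G \<and> (\<forall>e \<in> T. c e \<in> {a, b}) \<and>
     (\<forall>e f. e \<in> T \<longrightarrow> ab_adj G c a b e f \<longrightarrow> f \<in> T)"

lemma kempe_equiv_refl: "kempe_equiv G c c"
  by (simp add: kempe_equiv_def)

lemma kempe_equiv_trans [trans]:
  "kempe_equiv G c c' \<Longrightarrow> kempe_equiv G c' c'' \<Longrightarrow> kempe_equiv G c c''"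
  unfolding kempe_equiv_def by (rule rtranclp_trans)

lemma kempe_step_iff:
  "kempe_step G c c' \<longleftrightarrow> (\<exists>a b e. a \<in> {1, 2, 3} \<and> b \<in> {1, 2, 3} \<and> a \<noteq> b \<and>
     e \<in> edges G \<and> c e \<in> {a, b} \<and> c' = kempe_switch a b (kempe_chain G c a b e) c)"
  by (simp add: kempe_step_def kempe_switch_def)

lemma kempe_switch_empty [simp]: "kempe_switch a b {} c = c"
  by (simp add: kempe_switch_def)

lemma kempe_closed_empty [simp]: "kempe_closed G c a b {}"
  by (simp add: kempe_closed_def)

lemma ab_adj_sym: "ab_adj G c a b e f \<longleftrightarrow> ab_adj G c a b f e"
  by (auto simp: ab_adj_def)

lemma kempe_closedD:
  assumes "kempe_closed G c a b T" "e \<in> T" "f \<in> edges G" "c f \<in> {a, b}" "meet G e f"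
  shows "f \<in> T"
  using assms unfolding kempe_closed_def ab_adj_def by blast

lemma kempe_chain_closed:
  assumes "e \<in> edges G" "c e \<in> {a, b}"
  shows "kempe_closed G c a b (kempe_chain G c a b e)"
proof -
  have "f \<in> edges G \<and> c f \<in> {a, b}" if "(ab_adj G c a b)\<^sup>*\<^sup>* e f" for f
    using that by induction (use assms in \<open>auto simp: ab_adj_def\<close>)
  then show ?thesis
    by (auto simp: kempe_closed_def kempe_chain_def)
qed

lemma kempe_chain_subset:
  assumes "kempe_closed G c a b T" "e \<in> T"
  shows "kempe_chain G c a b e \<subseteq> T"
proof
  fix f assume "f \<in> kempe_chain G c a b e"
  then have "(ab_adj G c a b)\<^sup>*\<^sup>* e f" by (simp add: kempe_chain_def)
  then show "f \<in> T"
    using assms by induction (auto simp: kempe_closed_def)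
qed

lemma kempe_closed_colour_class: "kempe_closed G c a b {e \<in> edges G. c e \<in> {a, b}}"
  by (auto simp: kempe_closed_def ab_adj_def)

lemma kempe_switch_colour_class:
  "e \<in> edges G \<Longrightarrow> kempe_switch a b {e \<in> edges G. c e \<in> {a, b}} c e = swap_col a b (c e)"
  by (simp add: kempe_switch_def swap_col_other)

lemma ab_adj_kempe_switch: "ab_adj G (kempe_switch a b T c) a b = ab_adj G c a b"
  by (auto simp: ab_adj_def kempe_switch_def fun_eq_iff swap_col_def)

lemma kempe_closed_ab_adj: "kempe_closed G c a b T \<Longrightarrow> ab_adj G c a b e f \<Longrightarrow> e \<in> T \<longleftrightarrow> f \<in> T"
  unfolding kempe_closed_def by (metis ab_adj_sym)

lemma kempe_closed_Diff_kempe_switch: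
  assumes "kempe_closed G c a b T" "kempe_closed G c a b K"
  shows "kempe_closed G (kempe_switch a b K c) a b (T - K)"
  unfolding kempe_closed_def ab_adj_kempe_switch
proof (intro conjI ballI allI impI)
  fix f g assume "f \<in> T - K" "ab_adj G c a b f g"
  then show "g \<in> T - K"
    using kempe_closed_ab_adj[OF assms(1)] kempe_closed_ab_adj[OF assms(2)] by blast
qed (use assms(1) in \<open>auto simp: kempe_closed_def kempe_switch_def\<close>)

lemma kempe_equiv_kempe_switch:
  assumes "finite (edges G)" "a \<in> {1, 2, 3}" "b \<in> {1, 2, 3}" "a \<noteq> b"
    and "kempe_closed G c a b T"
  shows "kempe_equiv G c (kempe_switch a b T c)"
  using assms(5)
proof (induction "card T" arbitrary: T c rule: less_induct)
  case less
  show ?case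
  proof (cases "T = {}")
    case True
    then show ?thesis by (simp add: kempe_equiv_refl)
  next
    case False
    then obtain e where e: "e \<in> T" by blast
    define K where "K = kempe_chain G c a b e"
    define c' where "c' = kempe_switch a b K c"
    have e_col: "e \<in> edges G" "c e \<in> {a, b}"
      using less.prems e by (auto simp: kempe_closed_def)
    have step: "kempe_step G c c'"
      unfolding kempe_step_iff c'_def K_def using assms(2-4) e_col by blast
    have K_closed: "kempe_closed G c a b K"
      unfolding K_def using e_col by (rule kempe_chain_closed)
    have KT: "K \<subseteq> T"
      unfolding K_def using less.prems e by (rule kempe_chain_subset)
    have "e \<in> K"
      by (simp add: K_def kempe_chain_def)
    moreover have "finite T"
      using less.prems assms(1) finite_subset by (auto simp: kempe_closed_def)
    ultimately have card_less: "card (T - K) < card T"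
      using e by (intro psubset_card_mono) auto
    have "kempe_closed G c' a b (T - K)"
      unfolding c'_def using less.prems K_closed by (rule kempe_closed_Diff_kempe_switch)
    then have "kempe_equiv G c' (kempe_switch a b (T - K) c')"
      using less.hyps card_less by blast
    moreover have "kempe_switch a b (T - K) c' = kempe_switch a b T c"
      using KT by (auto simp: c'_def kempe_switch_def fun_eq_iff)
    ultimately show ?thesis
      using step by (simp add: kempe_equiv_def converse_rtranclp_into_rtranclp)
  qed
qed

lemma kempe_equiv_swap_col:
  assumes "finite (edges G)" "a \<in> {1, 2, 3}" "b \<in> {1, 2, 3}" "a \<noteq> b"
    and "\<forall>e. e \<notin> edges G \<longrightarrow> c e = 0"
  shows "kempe_equiv G c (swap_col a b \<circ> c)"
proof -
  have switch: "kempe_switch a b {e \<in> edges G. c e \<in> {a, b}} c e = swap_col a b (c e)" for e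
  proof (cases "e \<in> edges G")
    case True
    then show ?thesis by (rule kempe_switch_colour_class)
  next
    case False
    then show ?thesis
      using assms(2,3,5) by (auto simp: kempe_switch_def swap_col_def)
  qed
  then have "kempe_switch a b {e \<in> edges G. c e \<in> {a, b}} c = swap_col a b \<circ> c"
    by (simp add: fun_eq_iff)
  then show ?thesis
    using kempe_equiv_kempe_switch[OF assms(1-4) kempe_closed_colour_class] by metis
qed

lemma kempe_step_permute:
  assumes "p permutes {1, 2, 3}" "kempe_step G c c'"
  shows "kempe_step G (p \<circ> c) (p \<circ> c')"
proof -
  obtain a b e where ab: "a \<in> {1, 2, 3}" "b \<in> {1, 2, 3}" "a \<noteq> b" "e \<in> edges G" "c e \<in> {a, b}"
    and c': "c' = kempe_switch a b (kempe_chain G c a b e) c"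
    using assms(2) unfolding kempe_step_iff by blast
  have inj: "inj p"
    using assms(1) by (rule permutes_inj)
  have "ab_adj G (p \<circ> c) (p a) (p b) = ab_adj G c a b"
    by (simp add: ab_adj_def fun_eq_iff inj_eq[OF inj])
  then have "kempe_chain G (p \<circ> c) (p a) (p b) e = kempe_chain G c a b e"
    by (simp add: kempe_chain_def)
  then have "p \<circ> c' = kempe_switch (p a) (p b) (kempe_chain G (p \<circ> c) (p a) (p b) e) (p \<circ> c)"
    by (simp add: c' kempe_switch_def fun_eq_iff inj_swap_col[OF inj])
  moreover have "p a \<in> {1, 2, 3}" "p b \<in> {1, 2, 3}"
    using ab(1,2) by (simp_all only: permutes_in_image[OF assms(1)])
  moreover have "p a \<noteq> p b" "(p \<circ> c) e \<in> {p a, p b}"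
    using ab(3,5) by (auto simp: inj_eq[OF inj])
  ultimately show ?thesis
    unfolding kempe_step_iff using ab(4) by blast
qed

definition glue_col :: "('v, 'e1 + 'e2) mgraph \<Rightarrow> ('e1 \<Rightarrow> nat) \<Rightarrow> ('e2 \<Rightarrow> nat) \<Rightarrow> 'e1 + 'e2 \<Rightarrow> nat"
  where "glue_col G c d = (\<lambda>e. if e \<in> edges G then case_sum c d e else 0)"

definition matched :: "('e1 \<times> 'e2) set \<Rightarrow> ('e1 \<Rightarrow> nat) \<Rightarrow> ('e2 \<Rightarrow> nat) \<Rightarrow> bool" where
  "matched P c d \<longleftrightarrow> (\<forall>(e, f) \<in> P. c e = d f)"

lemma glue_col_permute: "\<sigma> 0 = 0 \<Longrightarrow> \<sigma> \<circ> glue_col G c d = glue_col G (\<sigma> \<circ> c) (\<sigma> \<circ> d)"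
  by (auto simp: glue_col_def fun_eq_iff split: sum.split)

lemma matched_cong:
  assumes "matched P c d" "P \<subseteq> A \<times> B" "\<And>e. e \<in> A \<Longrightarrow> c e = c' e" "\<And>f. f \<in> B \<Longrightarrow> d f = d' f"
  shows "matched P c' d'"
  using assms unfolding matched_def by fastforce

lemma matched_swap_col:
  assumes "matched P (swap_col a b \<circ> c) d"
  shows "matched P c (swap_col a b \<circ> d)"
  unfolding matched_def
proof (intro ballI, clarify)
  fix e f assume "(e, f) \<in> P"
  then have "d f = swap_col a b (c e)"
    using assms by (auto simp: matched_def)
  then show "c e = (swap_col a b \<circ> d) f" by simp
qed

text \<open>\<open>G\<close> is obtained by gluing \<open>G1\<close> and \<open>G2\<close>: its edges are those of \<open>G1\<close> and the edges \<open>E2\<close> of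
  \<open>G2\<close>, and the two sides touch only along the \<open>ports\<close>, pairs of an edge of \<open>G1\<close> and an edge of
  \<open>G2\<close> (for Y the pairs \<open>(x j, y j)\<close>, for H the single pair \<open>(x, y)\<close>).\<close>

locale gluing =
  fixes G :: "('v1 + 'v2, 'e1 + 'e2) mgraph" and G1 :: "('v1, 'e1) mgraph"
    and G2 :: "('v2, 'e2) mgraph" and E2 :: "'e2 set" and ports :: "('e1 \<times> 'e2) set"
  assumes finite_edges: "finite (edges G)"
    and edges_eq: "edges G = Inl ` edges G1 \<union> Inr ` E2"
    and E2_subset: "E2 \<subseteq> edges G2"
    and ports_subset: "ports \<subseteq> edges G1 \<times> edges G2"
    and ports_meet: "(e, f) \<in> ports \<Longrightarrow> (e', f') \<in> ports \<Longrightarrow> meet G1 e e' \<and> meet G2 f f'"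
    and meet_Inl_Inl: "meet G (Inl e) (Inl e') \<Longrightarrow> meet G1 e e'"
    and meet_Inr_Inr: "meet G (Inr f) (Inr f') \<Longrightarrow> meet G2 f f'"
    and meet_Inl_Inr: "meet G (Inl e) (Inr f) \<Longrightarrow>
      \<exists>(e0, f0) \<in> ports. (e = e0 \<and> meet G2 f0 f) \<or> (f = f0 \<and> meet G1 e0 e)"
begin

lemma Inl_in_edges [simp]: "Inl e \<in> edges G \<longleftrightarrow> e \<in> edges G1"
  and Inr_in_edges [simp]: "Inr f \<in> edges G \<longleftrightarrow> f \<in> E2"
  by (auto simp: edges_eq)

lemma glue_col_Inl [simp]: "glue_col G c d (Inl e) = (if e \<in> edges G1 then c e else 0)"
  by (auto simp: glue_col_def edges_eq)

lemma glue_col_Inr [simp]: "glue_col G c d (Inr f) = (if f \<in> E2 then d f else 0)"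
  by (auto simp: glue_col_def edges_eq)

lemma glue_col_cong:
  "(\<And>e. e \<in> edges G1 \<Longrightarrow> c e = c' e) \<Longrightarrow> (\<And>f. f \<in> E2 \<Longrightarrow> d f = d' f) \<Longrightarrow>
    glue_col G c d = glue_col G c' d'"
  by (auto simp: glue_col_def edges_eq fun_eq_iff split: sum.split)

lemma ab_adj_glue_Inl_Inl:
  "ab_adj G (glue_col G c d) a b (Inl e) (Inl e') \<Longrightarrow> ab_adj G1 c a b e e'"
  using meet_Inl_Inl[of e e'] by (auto simp: ab_adj_def)

lemma ab_adj_glue_Inr_Inr:
  "ab_adj G (glue_col G c d) a b (Inr f) (Inr f') \<Longrightarrow> ab_adj G2 d a b f f'"
  using meet_Inr_Inr[of f f'] E2_subset by (auto simp: ab_adj_def simp del: insert_iff)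

lemma ab_adj_glue_Inl_Inr:
  assumes "matched ports c d" and "ab_adj G (glue_col G c d) a b (Inl e) (Inr f)"
  obtains e0 f0 where "(e0, f0) \<in> ports"
    "(e = e0 \<and> ab_adj G2 d a b f0 f) \<or> (f = f0 \<and> ab_adj G1 c a b e0 e)"
proof -
  have e: "e \<in> edges G1" "c e \<in> {a, b}" and f: "f \<in> E2" "d f \<in> {a, b}"
    using assms(2) by (auto simp: ab_adj_def)
  obtain e0 f0 where port: "(e0, f0) \<in> ports"
    and cross: "(e = e0 \<and> meet G2 f0 f) \<or> (f = f0 \<and> meet G1 e0 e)"
    using assms(2) meet_Inl_Inr unfolding ab_adj_def by blast
  have port_col: "e0 \<in> edges G1" "f0 \<in> edges G2" "c e0 = d f0"
    using port ports_subset assms(1) by (auto simp: matched_def)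
  from cross show thesis
  proof
    assume "e = e0 \<and> meet G2 f0 f"
    then have "ab_adj G2 d a b f0 f"
      using port_col e f E2_subset by (auto simp: ab_adj_def simp del: insert_iff)
    then show thesis
      using that port \<open>e = e0 \<and> meet G2 f0 f\<close> by blast
  next
    assume "f = f0 \<and> meet G1 e0 e"
    then have "ab_adj G1 c a b e0 e"
      using port_col e f by (auto simp: ab_adj_def simp del: insert_iff)
    then show thesis
      using that port \<open>f = f0 \<and> meet G1 e0 e\<close> by blast
  qed
qed

text \<open>A chain of \<open>G\<close> crosses between the two sides only through a port, so closed sets on
  both sides containing the same ports combine to a closed set of \<open>G\<close>.\<close>

lemma ab_adj_glue_cross:
  assumes "matched ports c d" "kempe_closed G1 c a b K" "kempe_closed G2 d a b L"
    and balanced: "\<And>e f. (e, f) \<in> ports \<Longrightarrow> e \<in> K \<longleftrightarrow> f \<in> L"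
    and "ab_adj G (glue_col G c d) a b (Inl e) (Inr f)"
  shows "e \<in> K \<longleftrightarrow> f \<in> L"
proof -
  obtain e0 f0 where port: "(e0, f0) \<in> ports"
    and cross: "(e = e0 \<and> ab_adj G2 d a b f0 f) \<or> (f = f0 \<and> ab_adj G1 c a b e0 e)"
    using ab_adj_glue_Inl_Inr[OF assms(1,5)] by blast
  from cross show ?thesis
  proof
    assume "e = e0 \<and> ab_adj G2 d a b f0 f"
    then show ?thesis
      using balanced[OF port] kempe_closed_ab_adj[OF assms(3), of f0 f] by blast
  next
    assume "f = f0 \<and> ab_adj G1 c a b e0 e"
    then show ?thesis
      using balanced[OF port] kempe_closed_ab_adj[OF assms(2), of e0 e] by blast
  qed
qed

lemma kempe_closed_glue:
  assumes "matched ports c d" "kempe_closed G1 c a b K" "kempe_closed G2 d a b L"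
    and "\<And>e f. (e, f) \<in> ports \<Longrightarrow> e \<in> K \<longleftrightarrow> f \<in> L"
  shows "kempe_closed G (glue_col G c d) a b (Inl ` K \<union> Inr ` (L \<inter> E2))"
  unfolding kempe_closed_def
proof (intro conjI ballI allI impI)
  show "Inl ` K \<union> Inr ` (L \<inter> E2) \<subseteq> edges G"
    using assms(2) by (auto simp: edges_eq kempe_closed_def)
next
  fix g assume "g \<in> Inl ` K \<union> Inr ` (L \<inter> E2)"
  then show "glue_col G c d g \<in> {a, b}"
    using assms(2,3) by (force simp: kempe_closed_def simp del: insert_iff)
next
  fix g h assume g: "g \<in> Inl ` K \<union> Inr ` (L \<inter> E2)" and adj: "ab_adj G (glue_col G c d) a b g h"
  note cross = ab_adj_glue_cross[OF assms]
  have "h \<in> edges G"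
    using adj by (simp add: ab_adj_def)
  then consider (Inl) e' where "h = Inl e'" | (Inr) f' where "h = Inr f'" "f' \<in> E2"
    by (auto simp: edges_eq)
  then show "h \<in> Inl ` K \<union> Inr ` (L \<inter> E2)"
  proof cases
    case Inl
    have "e' \<in> K"
    proof (cases g)
      case (Inl e)
      then show ?thesis
        using g adj \<open>h = Inl e'\<close> kempe_closed_ab_adj[OF assms(2)] ab_adj_glue_Inl_Inl by blast
    next
      case (Inr f)
      then have "ab_adj G (glue_col G c d) a b (Inl e') (Inr f)"
        using adj \<open>h = Inl e'\<close> ab_adj_sym by metis
      then show ?thesis
        using g Inr cross by blast
    qed
    then show ?thesis using Inl by blast
  next
    case Inr
    have "f' \<in> L"
    proof (cases g)
      case (Inl e)
      then show ?thesis
        using g adj \<open>h = Inr f'\<close> cross by blast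
    next
      case (Inr f)
      then show ?thesis
        using g adj \<open>h = Inr f'\<close> kempe_closed_ab_adj[OF assms(3)] ab_adj_glue_Inr_Inr by blast
    qed
    then show ?thesis using Inr by blast
  qed
qed

lemma kempe_switch_glue_col:
  assumes "K \<subseteq> edges G1"
  shows "kempe_switch a b (Inl ` K \<union> Inr ` (L \<inter> E2)) (glue_col G c d) =
    glue_col G (kempe_switch a b K c) (kempe_switch a b L d)"
  using assms by (auto simp: fun_eq_iff kempe_switch_def glue_col_def edges_eq split: sum.split)

lemma kempe_equiv_glue_switch:
  assumes "matched ports c d" "a \<in> {1, 2, 3}" "b \<in> {1, 2, 3}" "a \<noteq> b"
    and "kempe_closed G1 c a b K" "kempe_closed G2 d a b L"
    and "\<And>e f. (e, f) \<in> ports \<Longrightarrow> e \<in> K \<longleftrightarrow> f \<in> L"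
  shows "matched ports (kempe_switch a b K c) (kempe_switch a b L d)"
    and "kempe_equiv G (glue_col G c d) (glue_col G (kempe_switch a b K c) (kempe_switch a b L d))"
proof -
  show "matched ports (kempe_switch a b K c) (kempe_switch a b L d)"
    using assms(1,7) by (auto simp: matched_def kempe_switch_def)
  have "K \<subseteq> edges G1"
    using assms(5) by (simp add: kempe_closed_def)
  then show "kempe_equiv G (glue_col G c d) (glue_col G (kempe_switch a b K c) (kempe_switch a b L d))"
    using kempe_equiv_kempe_switch[OF finite_edges assms(2-4) kempe_closed_glue[OF assms(1,5-7)]]
    by (simp add: kempe_switch_glue_col)
qed

lemma kempe_equiv_glue_col_swap_col:
  assumes "a \<in> {1, 2, 3}" "b \<in> {1, 2, 3}" "a \<noteq> b"
  shows "kempe_equiv G (glue_col G (swap_col a b \<circ> c) d) (glue_col G c (swap_col a b \<circ> d))"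
proof -
  have "kempe_equiv G (glue_col G (swap_col a b \<circ> c) d) (swap_col a b \<circ> glue_col G (swap_col a b \<circ> c) d)"
    using finite_edges assms by (intro kempe_equiv_swap_col) (auto simp: glue_col_def)
  also have "swap_col a b \<circ> glue_col G (swap_col a b \<circ> c) d = glue_col G c (swap_col a b \<circ> d)"
  proof -
    have "swap_col a b 0 = 0" "swap_col a b \<circ> swap_col a b = id"
      using assms by (auto simp: swap_col_def)
    then show ?thesis
      by (simp add: glue_col_permute comp_assoc[symmetric])
  qed
  finally show ?thesis .
qed

lemma port_in_kempe_closed_left:
  assumes K: "kempe_closed G1 c a b K" and port: "(e0, f0) \<in> ports" "e0 \<in> K"
    and "(e, f) \<in> ports"
  shows "e \<in> K \<longleftrightarrow> c e \<in> {a, b}"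
proof
  assume "e \<in> K"
  then show "c e \<in> {a, b}" using K by (simp add: kempe_closed_def)
next
  assume "c e \<in> {a, b}"
  moreover have "e \<in> edges G1" "meet G1 e0 e"
    using assms(4) ports_subset ports_meet[OF port(1) assms(4)] by auto
  ultimately show "e \<in> K" using kempe_closedD[OF K port(2)] by blast
qed

lemma port_in_kempe_closed_right:
  assumes L: "kempe_closed G2 d a b L" and port: "(e0, f0) \<in> ports" "f0 \<in> L"
    and "(e, f) \<in> ports"
  shows "f \<in> L \<longleftrightarrow> d f \<in> {a, b}"
proof
  assume "f \<in> L"
  then show "d f \<in> {a, b}" using L by (simp add: kempe_closed_def)
next
  assume "d f \<in> {a, b}"
  moreover have "f \<in> edges G2" "meet G2 f0 f"
    using assms(4) ports_subset ports_meet[OF port(1) assms(4)] by auto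
  ultimately show "f \<in> L" using kempe_closedD[OF L port(2)] by blast
qed

lemma glue_kempe_step_left:
  assumes "matched ports c d" "kempe_step G1 c c'"
  obtains \<sigma> where "\<sigma> permutes {1, 2, 3}" "matched ports c' (\<sigma> \<circ> d)"
    "kempe_equiv G (glue_col G c d) (glue_col G c' (\<sigma> \<circ> d))"
proof -
  obtain a b e where ab: "a \<in> {1, 2, 3}" "b \<in> {1, 2, 3}" "a \<noteq> b"
    and e: "e \<in> edges G1" "c e \<in> {a, b}" and c': "c' = kempe_switch a b (kempe_chain G1 c a b e) c"
    using assms(2) unfolding kempe_step_iff by blast
  define K where "K = kempe_chain G1 c a b e"
  have K: "kempe_closed G1 c a b K"
    unfolding K_def using e by (rule kempe_chain_closed)
  show thesis
  proof (cases "\<exists>(e0, f0) \<in> ports. e0 \<in> K")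
    case False
    then have "e' \<in> K \<longleftrightarrow> f' \<in> {}" if "(e', f') \<in> ports" for e' f'
      using that by blast
    from kempe_equiv_glue_switch[OF assms(1) ab K kempe_closed_empty this] show thesis
      using that[of id] by (simp add: c' K_def)
  next
    case True
    then obtain e0 f0 where port: "(e0, f0) \<in> ports" "e0 \<in> K" by blast
    define L where "L = {f \<in> edges G2. d f \<in> {a, b}}"
    have "e' \<in> K \<longleftrightarrow> f' \<in> L" if "(e', f') \<in> ports" for e' f'
      using that port_in_kempe_closed_left[OF K port that] assms(1) ports_subset
      by (auto simp: L_def matched_def simp del: insert_iff)
    note switch =
      kempe_equiv_glue_switch[OF assms(1) ab K kempe_closed_colour_class[of G2 d a b, folded L_def] this]
    have L_swap: "kempe_switch a b L d f = (swap_col a b \<circ> d) f" if "f \<in> edges G2" for f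
      unfolding L_def using that by (simp only: kempe_switch_colour_class comp_apply)
    have "matched ports c' (swap_col a b \<circ> d)"
      by (rule matched_cong[OF switch(1) ports_subset]) (simp_all add: L_swap c' K_def)
    moreover have "glue_col G c' (kempe_switch a b L d) = glue_col G c' (swap_col a b \<circ> d)"
      using L_swap E2_subset by (intro glue_col_cong) auto
    ultimately show thesis
      using that[of "swap_col a b"] switch(2) swap_col_permutes[OF ab(1,2)]
      by (simp add: c' K_def L_def)
  qed
qed

lemma glue_kempe_step_right:
  assumes "matched ports c d" "kempe_step G2 d d'"
  obtains \<sigma> where "\<sigma> permutes {1, 2, 3}" "matched ports c (\<sigma> \<circ> d')"
    "kempe_equiv G (glue_col G c d) (glue_col G c (\<sigma> \<circ> d'))"
proof -
  obtain a b f where ab: "a \<in> {1, 2, 3}" "b \<in> {1, 2, 3}" "a \<noteq> b"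
    and f: "f \<in> edges G2" "d f \<in> {a, b}" and d': "d' = kempe_switch a b (kempe_chain G2 d a b f) d"
    using assms(2) unfolding kempe_step_iff by blast
  define L where "L = kempe_chain G2 d a b f"
  have L: "kempe_closed G2 d a b L"
    unfolding L_def using f by (rule kempe_chain_closed)
  show thesis
  proof (cases "\<exists>(e0, f0) \<in> ports. f0 \<in> L")
    case False
    then have "e' \<in> {} \<longleftrightarrow> f' \<in> L" if "(e', f') \<in> ports" for e' f'
      using that by blast
    from kempe_equiv_glue_switch[OF assms(1) ab kempe_closed_empty L this] show thesis
      using that[of id] by (simp add: d' L_def)
  next
    case True
    then obtain e0 f0 where port: "(e0, f0) \<in> ports" "f0 \<in> L" by blast
    define K where "K = {e \<in> edges G1. c e \<in> {a, b}}"
    have "e' \<in> K \<longleftrightarrow> f' \<in> L" if "(e', f') \<in> ports" for e' f'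
      using that port_in_kempe_closed_right[OF L port that] assms(1) ports_subset
      by (auto simp: K_def matched_def simp del: insert_iff)
    note switch =
      kempe_equiv_glue_switch[OF assms(1) ab kempe_closed_colour_class[of G1 c a b, folded K_def] L this]
    have K_swap: "kempe_switch a b K c e = (swap_col a b \<circ> c) e" if "e \<in> edges G1" for e
      unfolding K_def using that by (simp only: kempe_switch_colour_class comp_apply)
    have d'_L: "d' = kempe_switch a b L d"
      by (simp add: d' L_def)
    have "matched ports (swap_col a b \<circ> c) d'"
      by (rule matched_cong[OF switch(1) ports_subset]) (simp_all add: K_swap d'_L)
    moreover
    have "glue_col G (kempe_switch a b K c) d' = glue_col G (swap_col a b \<circ> c) d'"
      using K_swap by (intro glue_col_cong) auto
    then have "kempe_equiv G (glue_col G c d) (glue_col G (swap_col a b \<circ> c) d')"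
      using switch(2) by (simp add: d'_L)
    text \<open>The switch recolours all \<open>a\<close>-\<open>b\<close> edges of \<open>G1\<close>; a global swap of \<open>a\<close> and \<open>b\<close>
      restores the colouring of \<open>G1\<close> at the price of permuting the colours of \<open>G2\<close>.\<close>
    ultimately show thesis
      by (intro that[OF swap_col_permutes[OF ab(1,2)]] matched_swap_col
          kempe_equiv_trans[OF _ kempe_equiv_glue_col_swap_col[OF ab]])
  qed
qed

lemma glue_kempe_equiv_left:
  assumes "kempe_equiv G1 c c'" "\<sigma>0 permutes {1, 2, 3}" "matched ports c (\<sigma>0 \<circ> d)"
  obtains \<sigma> where "\<sigma> permutes {1, 2, 3}" "matched ports c' (\<sigma> \<circ> d)"
    "kempe_equiv G (glue_col G c (\<sigma>0 \<circ> d)) (glue_col G c' (\<sigma> \<circ> d))"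
proof -
  from assms(1)[unfolded kempe_equiv_def]
  have "\<exists>\<sigma>. \<sigma> permutes {1, 2, 3} \<and> matched ports c' (\<sigma> \<circ> d) \<and>
    kempe_equiv G (glue_col G c (\<sigma>0 \<circ> d)) (glue_col G c' (\<sigma> \<circ> d))"
  proof (induction rule: rtranclp_induct)
    case base
    then show ?case using assms(2,3) kempe_equiv_refl by blast
  next
    case (step c' c'')
    then obtain \<sigma> where \<sigma>: "\<sigma> permutes {1, 2, 3}" "matched ports c' (\<sigma> \<circ> d)"
      "kempe_equiv G (glue_col G c (\<sigma>0 \<circ> d)) (glue_col G c' (\<sigma> \<circ> d))" by blast
    obtain \<tau> where \<tau>: "\<tau> permutes {1, 2, 3}" "matched ports c'' (\<tau> \<circ> (\<sigma> \<circ> d))"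
      "kempe_equiv G (glue_col G c' (\<sigma> \<circ> d)) (glue_col G c'' (\<tau> \<circ> (\<sigma> \<circ> d)))"
      by (rule glue_kempe_step_left[OF \<sigma>(2) step(2)])
    have "\<tau> \<circ> \<sigma> permutes {1, 2, 3}"
      using \<sigma>(1) \<tau>(1) by (rule permutes_compose)
    then show ?case
      using \<tau>(2) kempe_equiv_trans[OF \<sigma>(3) \<tau>(3)] unfolding comp_assoc[symmetric] by blast
  qed
  then show thesis using that by blast
qed

lemma glue_kempe_equiv_right:
  assumes "kempe_equiv G2 d d'" "\<sigma>0 permutes {1, 2, 3}" "matched ports c (\<sigma>0 \<circ> d)"
  obtains \<sigma> where "\<sigma> permutes {1, 2, 3}" "matched ports c (\<sigma> \<circ> d')"
    "kempe_equiv G (glue_col G c (\<sigma>0 \<circ> d)) (glue_col G c (\<sigma> \<circ> d'))"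
proof -
  from assms(1)[unfolded kempe_equiv_def]
  have "\<exists>\<sigma>. \<sigma> permutes {1, 2, 3} \<and> matched ports c (\<sigma> \<circ> d') \<and>
    kempe_equiv G (glue_col G c (\<sigma>0 \<circ> d)) (glue_col G c (\<sigma> \<circ> d'))"
  proof (induction rule: rtranclp_induct)
    case base
    then show ?case using assms(2,3) kempe_equiv_refl by blast
  next
    case (step d' d'')
    then obtain \<sigma> where \<sigma>: "\<sigma> permutes {1, 2, 3}" "matched ports c (\<sigma> \<circ> d')"
      "kempe_equiv G (glue_col G c (\<sigma>0 \<circ> d)) (glue_col G c (\<sigma> \<circ> d'))" by blast
    have "kempe_step G2 (\<sigma> \<circ> d') (\<sigma> \<circ> d'')"
      using \<sigma>(1) step(2) by (rule kempe_step_permute)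
    then obtain \<tau> where \<tau>: "\<tau> permutes {1, 2, 3}" "matched ports c (\<tau> \<circ> (\<sigma> \<circ> d''))"
      "kempe_equiv G (glue_col G c (\<sigma> \<circ> d')) (glue_col G c (\<tau> \<circ> (\<sigma> \<circ> d'')))"
      by (rule glue_kempe_step_right[OF \<sigma>(2)])
    have "\<tau> \<circ> \<sigma> permutes {1, 2, 3}"
      using \<sigma>(1) \<tau>(1) by (rule permutes_compose)
    then show ?case
      using \<tau>(2) kempe_equiv_trans[OF \<sigma>(3) \<tau>(3)] unfolding comp_assoc[symmetric] by blast
  qed
  then show thesis using that by blast
qed

text \<open>Two matched colour permutations of the \<open>G2\<close> side differ by a permutation fixing the colour
  of a port, i.e.\ by the identity or by the transposition of the two other colours; the latter
  is a switch of all chains of those colours in \<open>G2\<close>, none of which reaches a port.\<close>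

lemma glue_kempe_equiv_permute:
  assumes \<sigma>: "\<sigma> permutes {1, 2, 3}" and \<tau>: "\<tau> permutes {1, 2, 3}"
    and matched: "matched ports c (\<sigma> \<circ> d)" "matched ports c (\<tau> \<circ> d)"
    and port: "(e0, f0) \<in> ports" "c e0 \<in> {1, 2, 3}"
  shows "kempe_equiv G (glue_col G c (\<sigma> \<circ> d)) (glue_col G c (\<tau> \<circ> d))"
proof -
  define \<rho> where "\<rho> = \<tau> \<circ> inv \<sigma>"
  have \<rho>: "\<rho> permutes {1, 2, 3}"
    unfolding \<rho>_def using permutes_inv[OF \<sigma>] \<tau> by (rule permutes_compose)
  have \<tau>_eq: "\<tau> = \<rho> \<circ> \<sigma>"
    by (simp add: \<rho>_def comp_assoc permutes_inv_o(2)[OF \<sigma>])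
  have rho_fixes: "\<rho> (c e) = c e" if "(e, f) \<in> ports" for e f
  proof -
    have "\<sigma> (d f) = c e" "\<tau> (d f) = c e"
      using matched that by (auto simp: matched_def)
    then show ?thesis using \<tau>_eq by (metis comp_apply)
  qed
  from \<rho> port(2) rho_fixes[OF port(1)] show ?thesis
  proof (rule permutes_123_fixing)
    assume "\<rho> = id"
    then show ?thesis using \<tau>_eq kempe_equiv_refl by simp
  next
    fix a b assume ab: "a \<in> {1, 2, 3}" "b \<in> {1, 2, 3}" "a \<noteq> b" "\<rho> = swap_col a b"
    define L where "L = {f \<in> edges G2. (\<sigma> \<circ> d) f \<in> {a, b}}"
    have "e \<in> {} \<longleftrightarrow> f \<in> L" if "(e, f) \<in> ports" for e f
    proof -
      have "(\<sigma> \<circ> d) f = c e"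
        using matched(1) that by (auto simp: matched_def)
      moreover have "c e \<notin> {a, b}"
        using rho_fixes[OF that] ab(3,4) by (auto simp: swap_col_def)
      ultimately show ?thesis by (simp add: L_def)
    qed
    note switch = kempe_equiv_glue_switch(2)[OF matched(1) ab(1-3) kempe_closed_empty
        kempe_closed_colour_class[of G2 "\<sigma> \<circ> d" a b, folded L_def] this]
    have "glue_col G c (kempe_switch a b L (\<sigma> \<circ> d)) = glue_col G c (\<tau> \<circ> d)"
    proof (rule glue_col_cong)
      fix f assume "f \<in> E2"
      then have "f \<in> edges G2"
        using E2_subset by blast
      then have "kempe_switch a b L (\<sigma> \<circ> d) f = swap_col a b ((\<sigma> \<circ> d) f)"
        unfolding L_def by (rule kempe_switch_colour_class)
      then show "kempe_switch a b L (\<sigma> \<circ> d) f = (\<tau> \<circ> d) f"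
        by (simp add: \<tau>_eq ab(4))
    qed simp
    then show ?thesis using switch by simp
  qed
qed

theorem kempe_equiv_glue_col:
  assumes "kempe_equiv G1 c1 c2" "kempe_equiv G2 d1 d2"
    and "p1 permutes {1, 2, 3}" "p2 permutes {1, 2, 3}"
    and "matched ports c1 (p1 \<circ> d1)" "matched ports c2 (p2 \<circ> d2)"
    and "(e0, f0) \<in> ports" "c2 e0 \<in> {1, 2, 3}"
  shows "kempe_equiv G (glue_col G c1 (p1 \<circ> d1)) (glue_col G c2 (p2 \<circ> d2))"
proof -
  obtain \<sigma> where \<sigma>: "\<sigma> permutes {1, 2, 3}" "matched ports c2 (\<sigma> \<circ> d1)"
    and left: "kempe_equiv G (glue_col G c1 (p1 \<circ> d1)) (glue_col G c2 (\<sigma> \<circ> d1))"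
    by (rule glue_kempe_equiv_left[OF assms(1,3,5)])
  obtain \<tau> where \<tau>: "\<tau> permutes {1, 2, 3}" "matched ports c2 (\<tau> \<circ> d2)"
    and right: "kempe_equiv G (glue_col G c2 (\<sigma> \<circ> d1)) (glue_col G c2 (\<tau> \<circ> d2))"
    by (rule glue_kempe_equiv_right[OF assms(2) \<sigma>])
  note left
  also note right
  also have "kempe_equiv G (glue_col G c2 (\<tau> \<circ> d2)) (glue_col G c2 (p2 \<circ> d2))"
    by (rule glue_kempe_equiv_permute[OF \<tau>(1) assms(4) \<tau>(2) assms(6-8)])
  finally show ?thesis .
qed

end

lemma other_end:
  assumes "wf_graph G" "e \<in> edges G" "v \<in> ends G e"
  shows "other_end G e v \<in> ends G e" "other_end G e v \<noteq> v"
proof -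
  obtain u w where "ends G e = {u, w}" "u \<noteq> w"
    using assms(1,2) by (auto simp: wf_graph_def card_2_iff)
  then have "\<exists>!z. z \<in> ends G e \<and> z \<noteq> v"
    using assms(3) by auto
  then show "other_end G e v \<in> ends G e" "other_end G e v \<noteq> v"
    unfolding other_end_def by (metis (mono_tags, lifting) theI')+
qed

lemma Y_data_edges:
  "Y_data G v x \<Longrightarrow> j \<in> {1, 2, 3} \<Longrightarrow> x j \<in> edges G \<and> v \<in> ends G (x j)"
  unfolding Y_data_def incident_def by blast

lemma ends_graphY_Inl:
  assumes wf: "wf_graph G1" "wf_graph G2" and Y: "Y_data G1 v1 x" "Y_data G2 v2 y"
  shows "Inl u \<in> ends (graphY G1 v1 x G2 v2 y) (Inl e) \<Longrightarrow> u \<in> ends G1 e"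
    and "Inr w \<in> ends (graphY G1 v1 x G2 v2 y) (Inl e) \<Longrightarrow> \<exists>j \<in> {1, 2, 3}. e = x j \<and> w \<in> ends G2 (y j)"
proof -
  let ?G = "graphY G1 v1 x G2 v2 y"
  have the_x: "(THE j'. j' \<in> {1, 2, 3} \<and> x j' = x j) = j" if "j \<in> {1, 2, 3}" for j
    using Y(1) that unfolding Y_data_def by (intro the_equality) (auto dest: inj_onD)
  have ends_x: "ends ?G (Inl (x j)) =
      {Inl (other_end G1 (x j) v1), Inr (other_end G2 (y j) v2)}" if "j \<in> {1, 2, 3}" for j
  proof -
    have "x j \<in> x ` {1, 2, 3}"
      using that by blast
    then show ?thesis
      unfolding graphY_def mgraph.select_convs sum.case if_P[OF \<open>x j \<in> x ` {1, 2, 3}\<close>] Let_def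
        the_x[OF that] by simp
  qed
  have other_ends: "other_end G1 (x j) v1 \<in> ends G1 (x j)" "other_end G2 (y j) v2 \<in> ends G2 (y j)"
    if "j \<in> {1, 2, 3}" for j
    using other_end[OF wf(1)] other_end[OF wf(2)] Y_data_edges[OF Y(1) that] Y_data_edges[OF Y(2) that]
    by blast+
  show "u \<in> ends G1 e" if u: "Inl u \<in> ends ?G (Inl e)"
  proof (cases "e \<in> x ` {1, 2, 3}")
    case True
    then obtain j where j: "j \<in> {1, 2, 3}" "e = x j" by blast
    then show ?thesis using u ends_x[OF j(1)] other_ends[OF j(1)] by simp
  qed (use u in \<open>auto simp: graphY_def\<close>)
  show "\<exists>j \<in> {1, 2, 3}. e = x j \<and> w \<in> ends G2 (y j)" if w: "Inr w \<in> ends ?G (Inl e)"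
  proof (cases "e \<in> x ` {1, 2, 3}")
    case True
    then obtain j where j: "j \<in> {1, 2, 3}" "e = x j" by blast
    then show ?thesis using w ends_x[OF j(1)] other_ends[OF j(1)] by auto
  qed (use w in \<open>auto simp: graphY_def\<close>)
qed

lemma ends_graphY_Inr: "ends (graphY G1 v1 x G2 v2 y) (Inr f) = Inr ` ends G2 f"
  by (simp add: graphY_def)

lemma gluing_graphY:
  assumes wf: "wf_graph G1" "wf_graph G2" and Y: "Y_data G1 v1 x" "Y_data G2 v2 y"
  shows "gluing (graphY G1 v1 x G2 v2 y) G1 G2 (edges G2 - y ` {1, 2, 3})
    ((\<lambda>j. (x j, y j)) ` {1, 2, 3})"
proof unfold_locales
  let ?G = "graphY G1 v1 x G2 v2 y"
  let ?ports = "(\<lambda>j. (x j, y j)) ` {1, 2, 3}"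
  note x = Y_data_edges[OF Y(1)] and y = Y_data_edges[OF Y(2)]
  note Inl_ends = ends_graphY_Inl[OF assms]
  show "finite (edges ?G)"
    using wf by (simp add: graphY_def wf_graph_def)
  show "edges ?G = Inl ` edges G1 \<union> Inr ` (edges G2 - y ` {1, 2, 3})"
    by (simp add: graphY_def)
  show "edges G2 - y ` {1, 2, 3} \<subseteq> edges G2"
    by blast
  show "?ports \<subseteq> edges G1 \<times> edges G2"
    using x y by blast
  show "meet G1 e e' \<and> meet G2 f f'" if "(e, f) \<in> ?ports" "(e', f') \<in> ?ports" for e f e' f'
    using that x y by blast
  show "meet G1 e e'" if meet: "meet ?G (Inl e) (Inl e')" for e e'
  proof -
    obtain w where w: "w \<in> ends ?G (Inl e)" "w \<in> ends ?G (Inl e')"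
      using meet by blast
    show ?thesis
      by (cases w) (use w Inl_ends x in blast)+
  qed
  show "meet G2 f f'" if "meet ?G (Inr f) (Inr f')" for f f'
    using that unfolding ends_graphY_Inr by blast
  show "\<exists>(e0, f0) \<in> ?ports. (e = e0 \<and> meet G2 f0 f) \<or> (f = f0 \<and> meet G1 e0 e)"
    if "meet ?G (Inl e) (Inr f)" for e f
    using that Inl_ends(2) unfolding ends_graphY_Inr by blast
qed

lemma kempe_equiv_colY:
  assumes "wf_graph G1" "wf_graph G2" "Y_data G1 v1 x" "Y_data G2 v2 y"
    and "kempe_equiv G1 c1 c2" "kempe_equiv G2 d1 d2" "proper_3col G1 c2"
    and "Y_perm x y c1 d1 p1" "Y_perm x y c2 d2 p2"
  shows "kempe_equiv (graphY G1 v1 x G2 v2 y)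
    (colY G1 v1 x G2 v2 y c1 d1 p1) (colY G1 v1 x G2 v2 y c2 d2 p2)"
proof -
  have col: "colY G1 v1 x G2 v2 y c d p = glue_col (graphY G1 v1 x G2 v2 y) c (p \<circ> d)" for c d p
    by (simp add: colY_def glue_col_def fun_eq_iff split: sum.split)
  have "p1 permutes {1, 2, 3}" "p2 permutes {1, 2, 3}"
    "matched ((\<lambda>j. (x j, y j)) ` {1, 2, 3}) c1 (p1 \<circ> d1)"
    "matched ((\<lambda>j. (x j, y j)) ` {1, 2, 3}) c2 (p2 \<circ> d2)"
    using assms(8,9) by (auto simp: Y_perm_def matched_def)
  moreover have "(x 1, y 1) \<in> (\<lambda>j. (x j, y j)) ` {1, 2, 3}" "c2 (x 1) \<in> {1, 2, 3}"
    using assms(7) Y_data_edges[OF assms(3)] by (auto simp: proper_3col_def)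
  ultimately show ?thesis
    unfolding col by (rule gluing.kempe_equiv_glue_col[OF gluing_graphY[OF assms(1-4)] assms(5,6)])
qed

lemma ends_graphH:
  assumes "H_data G1 x s11 s12" "H_data G2 y s21 s22"
  shows "Inl u \<in> ends (graphH G1 x s11 s12 G2 y s21 s22) (Inl e) \<Longrightarrow> u \<in> ends G1 e"
    and "Inr w \<in> ends (graphH G1 x s11 s12 G2 y s21 s22) (Inl e) \<Longrightarrow> e = x \<and> w \<in> ends G2 y"
    and "Inl u \<in> ends (graphH G1 x s11 s12 G2 y s21 s22) (Inr f) \<Longrightarrow> f = y \<and> u \<in> ends G1 x"
    and "Inr w \<in> ends (graphH G1 x s11 s12 G2 y s21 s22) (Inr f) \<Longrightarrow> w \<in> ends G2 f"
proof -
  let ?G = "graphH G1 x s11 s12 G2 y s21 s22"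
  have Inl: "ends ?G (Inl e) = (if e = x then {Inl s11, Inr s21} else Inl ` ends G1 e)" for e
    by (simp add: graphH_def)
  have Inr: "ends ?G (Inr f) = (if f = y then {Inl s12, Inr s22} else Inr ` ends G2 f)" for f
    by (simp add: graphH_def)
  have "s11 \<in> ends G1 x" "s12 \<in> ends G1 x" "s21 \<in> ends G2 y" "s22 \<in> ends G2 y"
    using assms by (auto simp: H_data_def)
  note H_ends = this
  show "Inl u \<in> ends ?G (Inl e) \<Longrightarrow> u \<in> ends G1 e"
    using H_ends by (cases "e = x") (simp_all add: Inl image_iff)
  show "Inr w \<in> ends ?G (Inl e) \<Longrightarrow> e = x \<and> w \<in> ends G2 y"
    using H_ends by (cases "e = x") (simp_all add: Inl image_iff)
  show "Inl u \<in> ends ?G (Inr f) \<Longrightarrow> f = y \<and> u \<in> ends G1 x"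
    using H_ends by (cases "f = y") (simp_all add: Inr image_iff)
  show "Inr w \<in> ends ?G (Inr f) \<Longrightarrow> w \<in> ends G2 f"
    using H_ends by (cases "f = y") (simp_all add: Inr image_iff)
qed

lemma gluing_graphH:
  assumes fin: "finite (edges G1)" "finite (edges G2)"
    and H: "H_data G1 x s11 s12" "H_data G2 y s21 s22"
  shows "gluing (graphH G1 x s11 s12 G2 y s21 s22) G1 G2 (edges G2) {(x, y)}"
proof unfold_locales
  let ?G = "graphH G1 x s11 s12 G2 y s21 s22"
  note ends = ends_graphH[OF H]
  have xy: "x \<in> edges G1" "meet G1 x x" "y \<in> edges G2" "meet G2 y y"
    using H by (auto simp: H_data_def)
  show "finite (edges ?G)"
    using fin by (simp add: graphH_def)
  show "edges ?G = Inl ` edges G1 \<union> Inr ` edges G2"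
    by (simp add: graphH_def)
  show "edges G2 \<subseteq> edges G2" "{(x, y)} \<subseteq> edges G1 \<times> edges G2"
    using xy by auto
  show "meet G1 e e' \<and> meet G2 f f'" if "(e, f) \<in> {(x, y)}" "(e', f') \<in> {(x, y)}" for e f e' f'
    using that xy by auto
  show "meet G1 e e'" if meet: "meet ?G (Inl e) (Inl e')" for e e'
  proof -
    obtain w where w: "w \<in> ends ?G (Inl e)" "w \<in> ends ?G (Inl e')"
      using meet by blast
    show ?thesis
      by (cases w) (use w ends xy in blast)+
  qed
  show "meet G2 f f'" if meet: "meet ?G (Inr f) (Inr f')" for f f'
  proof -
    obtain w where w: "w \<in> ends ?G (Inr f)" "w \<in> ends ?G (Inr f')"
      using meet by blast
    show ?thesis
      by (cases w) (use w ends xy in blast)+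
  qed
  show "\<exists>(e0, f0) \<in> {(x, y)}. (e = e0 \<and> meet G2 f0 f) \<or> (f = f0 \<and> meet G1 e0 e)"
    if meet: "meet ?G (Inl e) (Inr f)" for e f
  proof -
    obtain w where w: "w \<in> ends ?G (Inl e)" "w \<in> ends ?G (Inr f)"
      using meet by blast
    show ?thesis
      by (cases w) (use w ends in blast)+
  qed
qed

lemma kempe_equiv_colH:
  assumes "finite (edges G1)" "finite (edges G2)" "H_data G1 x s11 s12" "H_data G2 y s21 s22"
    and "kempe_equiv G1 c1 c2" "kempe_equiv G2 d1 d2" "proper_3col G1 c2"
    and "H_perm x y c1 d1 p1" "H_perm x y c2 d2 p2"
  shows "kempe_equiv (graphH G1 x s11 s12 G2 y s21 s22)
    (colH G1 x s11 s12 G2 y s21 s22 c1 d1 p1) (colH G1 x s11 s12 G2 y s21 s22 c2 d2 p2)"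
proof -
  have col: "colH G1 x s11 s12 G2 y s21 s22 c d p = glue_col (graphH G1 x s11 s12 G2 y s21 s22) c (p \<circ> d)"
    for c d p
    by (simp add: colH_def glue_col_def fun_eq_iff split: sum.split)
  have "p1 permutes {1, 2, 3}" "p2 permutes {1, 2, 3}"
    "matched {(x, y)} c1 (p1 \<circ> d1)" "matched {(x, y)} c2 (p2 \<circ> d2)"
    using assms(8,9) by (auto simp: H_perm_def matched_def)
  moreover have "(x, y) \<in> {(x, y)}" "c2 x \<in> {1, 2, 3}"
    using assms(3,7) by (auto simp: H_data_def proper_3col_def)
  ultimately show ?thesis
    unfolding col by (rule gluing.kempe_equiv_glue_col[OF gluing_graphH[OF assms(1-4)] assms(5,6)])
qed

theorem lemma10:
  fixes G1 :: "('v1, 'e1) mgraph" and G2 :: "('v2, 'e2) mgraph"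
    and c1 c2 :: "'e1 \<Rightarrow> nat" and d1 d2 :: "'e2 \<Rightarrow> nat"
  assumes "cubic G1" and "cubic G2"
    and "proper_3col G1 c1" and "proper_3col G1 c2" and "kempe_equiv G1 c1 c2"
    and "proper_3col G2 d1" and "proper_3col G2 d2" and "kempe_equiv G2 d1 d2"
  shows "(\<forall>v1 x v2 y p1 p2. Y_data G1 v1 x \<and> Y_data G2 v2 y \<and>
            Y_perm x y c1 d1 p1 \<and> Y_perm x y c2 d2 p2 \<longrightarrow>
            kempe_equiv (graphY G1 v1 x G2 v2 y)
              (colY G1 v1 x G2 v2 y c1 d1 p1) (colY G1 v1 x G2 v2 y c2 d2 p2))
       \<and> (\<forall>x s11 s12 y s21 s22 p1 p2. H_data G1 x s11 s12 \<and> H_data G2 y s21 s22 \<and>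
            H_perm x y c1 d1 p1 \<and> H_perm x y c2 d2 p2 \<longrightarrow>
            kempe_equiv (graphH G1 x s11 s12 G2 y s21 s22)
              (colH G1 x s11 s12 G2 y s21 s22 c1 d1 p1) (colH G1 x s11 s12 G2 y s21 s22 c2 d2 p2))"
proof -
  have wf: "wf_graph G1" "wf_graph G2"
    using assms(1,2) by (simp_all add: cubic_def)
  then have fin: "finite (edges G1)" "finite (edges G2)"
    by (simp_all add: wf_graph_def)
  show ?thesis
    using kempe_equiv_colY[OF wf _ _ assms(5,8,4)] kempe_equiv_colH[OF fin _ _ assms(5,8,4)] by blast
qed

end
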